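(* Let $\Omega$ be finite, $\mathcal P$ the probability functions on $\Omega$, $M$ finite, and $s:\mathcal P\to[-\infty,M]^\Omega$ a proper scoring rule on $\mathcal P$ with $E_p s(p)$ finite for all $p\in\mathcal P$. Let $F=s[\mathcal P]\cap\mathbb R^\Omega$ be the set of finite scores. Suppose that for every convergent sequence $(p_n)$ in $\hat{\mathcal P}$ with $s(p_n)\in F$ for all $n$, we have $\lim_n\langle p_n,s(p_n)\rangle=\langle p,s(p)\rangle$, where $p=\lim_n p_n$. Then $\sigma_F(p)=\langle p,s(p)\rangle$ for all $p\in\hat{\mathcal P}$.
   Context: $\hat{\mathcal P}$ is the set of functions $q:\Omega\to[0,1]$ with $\sum_\omega q(\omega)=1$ (identified with probabilities via $q(\omega)=p(\{\omega\})$), with the Euclidean topology; for $q\in\hat{\mathcal P}$, $s(q)$ means $s$ of the corresponding probability. $\langle f,g\rangle=\sum_\omega f(\omega)\cdot g(\omega)$ for $f\in[0,1]^\Omega$ (or $f\in\mathbb R^\Omega$ when $g$ finite), $g\in[-\infty,\infty)^\Omega$, with the convention $a\cdot0=0\cdot a=0$ for all extended reals $a$; thus $E_p g=\langle\hat p,g\rangle$. $s$ is proper if $E_p s(p)\ge E_p s(q)$ for all probabilities $p,q$. For $F\subseteq\mathbb R^\Omega$ and $v$, $\sigma_F(v)=\sup_{z\in F}\langle v,z\rangle$. *)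

theory Defs
  imports "HOL-Analysis.Analysis" "HOL-Library.Extended_Real"
begin

definition Phat :: "('w::finite \<Rightarrow> real) set" where
  "Phat = {q. (\<forall>w. 0 \<le> q w) \<and> (\<Sum>w\<in>UNIV. q w) = 1}"

(* <f,g> with f real-valued, g extended-real-valued; ereal 0 * (-\<infinity>) = 0 in Isabelle *)
definition einner :: "('w::finite \<Rightarrow> real) \<Rightarrow> ('w \<Rightarrow> ereal) \<Rightarrow> ereal" where
  "einner f g = (\<Sum>w\<in>UNIV. ereal (f w) * g w)"

definition proper :: "(('w::finite \<Rightarrow> real) \<Rightarrow> ('w \<Rightarrow> ereal)) \<Rightarrow> bool" where
  "proper s \<longleftrightarrow> (\<forall>p\<in>Phat. \<forall>q\<in>Phat. einner p (s p) \<ge> einner p (s q))"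

definition finite_scores :: "(('w::finite \<Rightarrow> real) \<Rightarrow> ('w \<Rightarrow> ereal)) \<Rightarrow> ('w \<Rightarrow> real) set" where
  "finite_scores s = {z. \<exists>p\<in>Phat. s p = (\<lambda>w. ereal (z w))}"

definition support_fun :: "('w::finite \<Rightarrow> real) set \<Rightarrow> ('w \<Rightarrow> real) \<Rightarrow> ereal" where
  "support_fun F v = (SUP z\<in>F. ereal (\<Sum>w\<in>UNIV. v w * z w))"

end

theory Submission
  imports Defs "HOL-Real_Asymp.Real_Asymp"
begin

text \<open>Propriety gives \<open>\<langle>p, z\<rangle> \<le> \<langle>p, s(p)\<rangle>\<close> for every finite score \<open>z = s(q)\<close>, hence
  \<open>\<sigma>\<^sub>F(p) \<le> \<langle>p, s(p)\<rangle>\<close>. For the converse, mix \<open>p\<close> with the uniform distribution \<open>u\<close>: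
  \<open>p\<^sub>t = (1 - t) p + t u\<close> has full support, so the score \<open>s(p\<^sub>t)\<close>, being bounded above by \<open>M\<close>
  and having finite expectation under \<open>p\<^sub>t\<close>, is finite. Writing \<open>z\<^sub>t = s(p\<^sub>t) \<in> F\<close>,
  \<open>\<langle>p\<^sub>t, z\<^sub>t\<rangle> = (1 - t)\<langle>p, z\<^sub>t\<rangle> + t\<langle>u, z\<^sub>t\<rangle> \<le> (1 - t) \<sigma>\<^sub>F(p) + t M\<close>, and letting \<open>t \<rightarrow> 0\<close>
  the continuity hypothesis turns the left-hand side into \<open>\<langle>p, s(p)\<rangle>\<close>.\<close>

definition mixture :: "real \<Rightarrow> ('w \<Rightarrow> real) \<Rightarrow> ('w \<Rightarrow> real) \<Rightarrow> 'w \<Rightarrow> real" where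
  "mixture t p q = (\<lambda>w. (1 - t) * p w + t * q w)"

lemma einner_ereal: "einner p (\<lambda>w. ereal (z w)) = ereal (\<Sum>w\<in>UNIV. p w * z w)"
  by (simp add: einner_def)

lemma uniform_in_Phat: "(\<lambda>w::'w::finite. 1 / real CARD('w)) \<in> Phat"
  by (simp add: Phat_def)

lemma mixture_in_Phat:
  assumes "p \<in> Phat" "q \<in> Phat" "0 \<le> t" "t \<le> 1"
  shows "mixture t p q \<in> Phat"
proof -
  have "(\<Sum>w\<in>UNIV. mixture t p q w) = (1 - t) * (\<Sum>w\<in>UNIV. p w) + t * (\<Sum>w\<in>UNIV. q w)"
    by (simp add: mixture_def sum.distrib sum_distrib_left)
  with assms show ?thesis
    by (auto simp: Phat_def mixture_def)
qed

lemma mixture_pos: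
  assumes "p \<in> Phat" "q w > 0" "0 < t" "t \<le> 1"
  shows "mixture t p q w > 0"
proof -
  have "(1 - t) * p w \<ge> 0"
    using assms by (simp add: Phat_def)
  with assms show ?thesis
    by (simp add: mixture_def add_nonneg_pos)
qed

lemma inner_mixture:
  "(\<Sum>w\<in>UNIV. mixture t p q w * z w) =
     (1 - t) * (\<Sum>w\<in>UNIV. p w * z w) + t * (\<Sum>w\<in>UNIV. q w * z w)"
proof -
  have "mixture t p q w * z w = (1 - t) * (p w * z w) + t * (q w * z w)" for w
    by (simp add: mixture_def algebra_simps)
  then show ?thesis
    by (simp add: sum.distrib sum_distrib_left)
qed

lemma tendsto_mixture:
  assumes "(t \<longlongrightarrow> 0) F"
  shows "((\<lambda>n. mixture (t n) p q) \<longlongrightarrow> p) F"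
proof -
  have "continuous_on UNIV (\<lambda>x. mixture x p q)"
    unfolding mixture_def by (intro continuous_intros)
  from continuous_on_tendsto_compose[OF this assms] show ?thesis
    by (simp add: mixture_def)
qed

lemma inner_le_bound_of_Phat:
  assumes "q \<in> Phat" "\<And>w. z w \<le> M"
  shows "(\<Sum>w\<in>UNIV. q w * z w) \<le> M"
proof -
  have "(\<Sum>w\<in>UNIV. q w * z w) \<le> (\<Sum>w\<in>UNIV. q w * M)"
    using assms by (intro sum_mono mult_left_mono) (auto simp: Phat_def)
  also have "\<dots> = M"
    using assms(1) by (simp add: Phat_def sum_distrib_right[symmetric])
  finally show ?thesis .
qed

lemma einner_eq_minf:
  assumes "\<And>v. 0 \<le> q v" "\<And>v. g v \<noteq> \<infinity>" "q w > 0" "g w = -\<infinity>"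
  shows "einner q g = -\<infinity>"
proof -
  have "ereal (q v) * g v \<noteq> \<infinity>" for v
    using assms(1,2)[of v] by (cases "g v") (auto simp: ereal_mult_infty)
  then have rest: "(\<Sum>v\<in>UNIV-{w}. ereal (q v) * g v) \<noteq> \<infinity>"
    by (simp add: sum_Pinfty)
  have "einner q g = ereal (q w) * g w + (\<Sum>v\<in>UNIV-{w}. ereal (q v) * g v)"
    unfolding einner_def by (simp add: sum.remove)
  with assms(3,4) rest show ?thesis
    by (cases "\<Sum>v\<in>UNIV-{w}. ereal (q v) * g v") auto
qed

lemma finite_score_at_full_support:
  assumes bounded: "\<And>p w. p \<in> Phat \<Longrightarrow> s p w \<le> ereal M"
    and fin: "\<And>p. p \<in> Phat \<Longrightarrow> \<bar>einner p (s p)\<bar> \<noteq> \<infinity>"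
    and q: "q \<in> Phat" "\<And>w. q w > 0"
  shows "\<exists>z\<in>finite_scores s. s q = (\<lambda>w. ereal (z w))"
proof -
  have "s q w \<noteq> -\<infinity>" for w
  proof
    assume "s q w = -\<infinity>"
    moreover have "s q v \<noteq> \<infinity>" for v
      using bounded[OF q(1), of v] by auto
    ultimately have "einner q (s q) = -\<infinity>"
      using q by (intro einner_eq_minf) (auto simp: Phat_def)
    with fin[OF q(1)] show False by simp
  qed
  moreover have "s q w \<noteq> \<infinity>" for w
    using bounded[OF q(1), of w] by auto
  ultimately have "s q = (\<lambda>w. ereal (real_of_ereal (s q w)))"
    by (auto simp: fun_eq_iff ereal_real)
  with q(1) show ?thesis
    unfolding finite_scores_def by (intro bexI[of _ "\<lambda>w. real_of_ereal (s q w)"]) auto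
qed

lemma support_fun_finite_scores_le:
  assumes "proper s" "p \<in> Phat"
  shows "support_fun (finite_scores s) p \<le> einner p (s p)"
  unfolding support_fun_def
proof (rule SUP_least)
  fix z assume "z \<in> finite_scores s"
  then obtain q where "q \<in> Phat" "s q = (\<lambda>w. ereal (z w))"
    by (auto simp: finite_scores_def)
  with assms show "ereal (\<Sum>w\<in>UNIV. p w * z w) \<le> einner p (s p)"
    by (metis einner_ereal proper_def)
qed

lemma limit_le_of_mixture_bound:
  fixes a b c t :: "nat \<Rightarrow> real" and S :: ereal
  assumes "a \<longlonglongrightarrow> L" "t \<longlonglongrightarrow> 0" "\<And>n. 0 \<le> t n" "\<And>n. t n < 1"
    and "\<And>n. a n = (1 - t n) * b n + t n * c n" "\<And>n. c n \<le> M" "\<And>n. ereal (b n) \<le> S"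
  shows "ereal L \<le> S"
proof (rule LIMSEQ_le_const2)
  have "(\<lambda>n. (a n - t n * M) / (1 - t n)) \<longlonglongrightarrow> (L - 0 * M) / (1 - 0)"
    using assms(1,2) by (intro tendsto_intros) auto
  then show "(\<lambda>n. ereal ((a n - t n * M) / (1 - t n))) \<longlonglongrightarrow> ereal L"
    by (simp add: lim_ereal)
  show "\<exists>N. \<forall>n\<ge>N. ereal ((a n - t n * M) / (1 - t n)) \<le> S"
  proof (intro exI allI impI)
    fix n
    have "a n - t n * M \<le> (1 - t n) * b n"
      using assms(3-6)[of n] mult_left_mono[OF assms(6) assms(3)] by simp
    then have "(a n - t n * M) / (1 - t n) \<le> b n"
      using assms(4)[of n] by (simp add: pos_divide_le_eq mult.commute)
    then show "ereal ((a n - t n * M) / (1 - t n)) \<le> S"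
      using assms(7)[of n] by (meson ereal_less_eq(3) order_trans)
  qed
qed

lemma einner_le_support_fun_finite_scores:
  fixes s :: "('w::finite \<Rightarrow> real) \<Rightarrow> ('w \<Rightarrow> ereal)" and M :: real
  assumes bounded: "\<And>p w. p \<in> Phat \<Longrightarrow> s p w \<le> ereal M"
    and fin: "\<And>p. p \<in> Phat \<Longrightarrow> \<bar>einner p (s p)\<bar> \<noteq> \<infinity>"
    and cont: "\<And>ps p. (\<forall>n. ps n \<in> Phat) \<Longrightarrow> (\<forall>n. \<exists>z\<in>finite_scores s. s (ps n) = (\<lambda>w. ereal (z w)))
               \<Longrightarrow> ps \<longlonglongrightarrow> p \<Longrightarrow> (\<lambda>n. einner (ps n) (s (ps n))) \<longlonglongrightarrow> einner p (s p)"
    and p: "p \<in> Phat"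
  shows "einner p (s p) \<le> support_fun (finite_scores s) p"
proof -
  define u :: "'w \<Rightarrow> real" where "u = (\<lambda>w. 1 / real CARD('w))"
  define t :: "nat \<Rightarrow> real" where "t = (\<lambda>n. 1 / (real n + 2))"
  define ps where "ps = (\<lambda>n. mixture (t n) p u)"
  have u: "u \<in> Phat"
    unfolding u_def by (rule uniform_in_Phat)
  have t: "0 < t n" "t n < 1" for n
    by (auto simp: t_def)
  have t_lim: "t \<longlonglongrightarrow> 0"
    unfolding t_def by real_asymp
  have ps: "ps n \<in> Phat" "\<And>w. ps n w > 0" for n
    using t[of n] p u
    by (auto simp: ps_def u_def intro!: mixture_in_Phat mixture_pos)
  obtain z where z: "\<And>n. z n \<in> finite_scores s" "\<And>n. s (ps n) = (\<lambda>w. ereal (z n w))"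
    using finite_score_at_full_support[OF bounded fin ps] by metis
  obtain L where L: "einner p (s p) = ereal L"
    using fin[OF p] by (cases "einner p (s p)") auto
  have "(\<lambda>n. einner (ps n) (s (ps n))) \<longlonglongrightarrow> einner p (s p)"
    using ps(1) z tendsto_mixture[OF t_lim] unfolding ps_def by (intro cont) auto
  then have "(\<lambda>n. ereal (\<Sum>w\<in>UNIV. ps n w * z n w)) \<longlonglongrightarrow> ereal L"
    by (simp add: z(2) einner_ereal L)
  then have a_lim: "(\<lambda>n. \<Sum>w\<in>UNIV. ps n w * z n w) \<longlonglongrightarrow> L"
    by (simp add: lim_ereal)
  have z_le: "z n w \<le> M" for n w
    using bounded[OF ps(1), of n w] z(2)[of n] by simp
  have "ereal L \<le> support_fun (finite_scores s) p"
  proof (rule limit_le_of_mixture_bound[OF a_lim t_lim])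
    show "(\<Sum>w\<in>UNIV. ps n w * z n w) =
        (1 - t n) * (\<Sum>w\<in>UNIV. p w * z n w) + t n * (\<Sum>w\<in>UNIV. u w * z n w)" for n
      by (simp add: ps_def inner_mixture)
    show "(\<Sum>w\<in>UNIV. u w * z n w) \<le> M" for n
      by (rule inner_le_bound_of_Phat[OF u z_le])
    show "ereal (\<Sum>w\<in>UNIV. p w * z n w) \<le> support_fun (finite_scores s) p" for n
      unfolding support_fun_def using z(1) by (rule SUP_upper)
  qed (use t in \<open>auto intro: less_imp_le\<close>)
  with L show ?thesis by simp
qed

theorem lemma2:
  fixes s :: "('w::finite \<Rightarrow> real) \<Rightarrow> ('w \<Rightarrow> ereal)" and M :: real
  assumes bounded: "\<And>p w. p \<in> Phat \<Longrightarrow> s p w \<le> ereal M"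
    and proper_s: "proper s"
    and fin: "\<And>p. p \<in> Phat \<Longrightarrow> \<bar>einner p (s p)\<bar> \<noteq> \<infinity>"
    and cont: "\<And>ps p. (\<forall>n. ps n \<in> Phat) \<Longrightarrow> (\<forall>n. \<exists>z\<in>finite_scores s. s (ps n) = (\<lambda>w. ereal (z w)))
               \<Longrightarrow> ps \<longlonglongrightarrow> p \<Longrightarrow> (\<lambda>n. einner (ps n) (s (ps n))) \<longlonglongrightarrow> einner p (s p)"
  shows "\<forall>p\<in>Phat. support_fun (finite_scores s) p = einner p (s p)"
proof
  fix p :: "'w \<Rightarrow> real" assume "p \<in> Phat"
  then show "support_fun (finite_scores s) p = einner p (s p)"
    using support_fun_finite_scores_le[OF proper_s]
      einner_le_support_fun_finite_scores[OF bounded fin cont]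
    by (meson antisym)
qed

end
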